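(* Let $U$ and $V$ be finite-dimensional Euclidean vector spaces of the same dimension and let $\varphi$ be the endomorphism of $U\oplus V$ given in block form by $$\varphi=\begin{pmatrix}\mu\,\mathrm{Id}+A & M^*\\ M & \mu\,\mathrm{Id}+B\end{pmatrix},$$ where $\mu\in(-1,+\infty)$, $A$ and $B$ are symmetric and traceless endomorphisms of $U$ and $V$ respectively, $M:U\to V$ is linear with adjoint $M^*$ (with respect to the inner products), and $\|M(u)\|\geq\|u\|$ for every $u\in U$. Then $\varphi$ has at least one positive eigenvalue.
   Context: All norms and adjoints are taken with respect to the given Euclidean inner products; $\varphi$ is symmetric with respect to the orthogonal direct sum inner product on $U\oplus V$, so its eigenvalues are real. *)

theory Defs
  imports "HOL-Analysis.Analysis"
begin

text \<open>Trace of an endomorphism of a Euclidean space, computed in the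
  orthonormal basis Basis (independent of the orthonormal basis chosen).\<close>
definition lin_trace :: "('a::euclidean_space \<Rightarrow> 'a) \<Rightarrow> real" where
  "lin_trace f = (\<Sum>b\<in>Basis. f b \<bullet> b)"

definition is_eigenvalue :: "('a::real_vector \<Rightarrow> 'a) \<Rightarrow> real \<Rightarrow> bool" where
  "is_eigenvalue f c \<longleftrightarrow> (\<exists>x. x \<noteq> 0 \<and> f x = c *\<^sub>R x)"

end

theory Submission imports Defs begin

text \<open>Choose an orthonormal basis \<open>e\<^sub>i\<close> of \<open>U\<close> consisting of eigenvectors of \<open>M\<^sup>*M\<close>
  (right singular vectors of \<open>M\<close>). The vectors \<open>M e\<^sub>i\<close> are then pairwise orthogonal of norm
  at least 1, so \<open>f\<^sub>i = M e\<^sub>i / \<parallel>M e\<^sub>i\<parallel>\<close> is an orthonormal basis of \<open>V\<close> since the dimensions agree.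
  Summing the quadratic form of \<open>\<varphi>\<close> over the unit-length pairs \<open>(e\<^sub>i, f\<^sub>i)\<close>, the traces of
  \<open>A\<close> and \<open>B\<close> drop out and one gets \<open>2n\<mu> + 2\<Sum>\<^sub>i\<parallel>M e\<^sub>i\<parallel> \<ge> 2n(\<mu> + 1) > 0\<close>. Hence the
  quadratic form of \<open>\<varphi>\<close> is positive somewhere, and so is its largest eigenvalue, which is
  the maximum of the Rayleigh quotient.\<close>

definition orthonormal_basis :: "'a::euclidean_space set \<Rightarrow> bool" where
  "orthonormal_basis E \<longleftrightarrow>
     finite E \<and> span E = UNIV \<and> pairwise orthogonal E \<and> (\<forall>e\<in>E. norm e = 1)"

lemma quadratic_form_max_on_subspace:
  fixes T :: "'a::euclidean_space \<Rightarrow> 'a"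
  assumes lin: "linear T" and S: "subspace S" and ne: "S \<noteq> {0}"
  obtains x where "x \<in> S" "norm x = 1" "\<And>y. y \<in> S \<Longrightarrow> T y \<bullet> y \<le> (T x \<bullet> x) * (y \<bullet> y)"
proof -
  define K where "K = S \<inter> sphere 0 1"
  have cK: "compact K"
    unfolding K_def by (metis Int_commute closed_subspace[OF S] compact_Int_closed compact_sphere)
  have neK: "K \<noteq> {}"
  proof -
    obtain z where "z \<in> S" "z \<noteq> 0" using ne S subspace_0 by blast
    then have "z /\<^sub>R norm z \<in> K" using S by (simp add: K_def subspace_scale)
    then show ?thesis by blast
  qed
  have cont: "continuous_on K (\<lambda>x. T x \<bullet> x)"
    by (intro continuous_intros linear_continuous_on lin linear_conv_bounded_linear[THEN iffD1])
  obtain x where x: "x \<in> K" and max: "\<And>y. y \<in> K \<Longrightarrow> T y \<bullet> y \<le> T x \<bullet> x"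
    using continuous_attains_sup[OF cK neK cont] by blast
  have "T y \<bullet> y \<le> (T x \<bullet> x) * (y \<bullet> y)" if y: "y \<in> S" for y
  proof (cases "y = 0")
    case True
    then show ?thesis using linear_0[OF lin] by simp
  next
    case False
    have "y /\<^sub>R norm y \<in> K" using y False S by (simp add: K_def subspace_scale)
    then have "T (y /\<^sub>R norm y) \<bullet> (y /\<^sub>R norm y) \<le> T x \<bullet> x" by (rule max)
    then have "(T y \<bullet> y) / (norm y)\<^sup>2 \<le> T x \<bullet> x"
      by (simp add: linear_scale[OF lin] power2_eq_square divide_inverse mult_ac)
    then show ?thesis
      using False by (simp add: divide_le_eq power2_norm_eq_inner mult.commute)
  qed
  with x show thesis using that by (auto simp: K_def)
qed

lemma self_adjoint_maximizer_is_eigenvector: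
  fixes T :: "'a::euclidean_space \<Rightarrow> 'a"
  assumes lin: "linear T" and sym: "\<And>x y. T x \<bullet> y = x \<bullet> T y"
    and S: "subspace S" and inv: "\<And>y. y \<in> S \<Longrightarrow> T y \<in> S"
    and x: "x \<in> S" "norm x = 1"
    and max: "\<And>y. y \<in> S \<Longrightarrow> T y \<bullet> y \<le> (T x \<bullet> x) * (y \<bullet> y)"
  shows "T x = (T x \<bullet> x) *\<^sub>R x"
proof -
  define c where "c = T x \<bullet> x"
  define w where "w = c *\<^sub>R x - T x"
  define a where "a = w \<bullet> w"
  define b where "b = c * (w \<bullet> w) - T w \<bullet> w"
  have "w \<in> S" unfolding w_def using S x inv by (simp add: subspace_diff subspace_scale)
  have perturb: "0 \<le> 2 * t * a + t\<^sup>2 * b" for t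
  proof -
    have xtw: "x + t *\<^sub>R w \<in> S" using S x \<open>w \<in> S\<close> by (simp add: subspace_add subspace_scale)
    have "T w \<bullet> x = T x \<bullet> w" using sym[of w x] by (simp add: inner_commute)
    then have Tq: "T (x + t *\<^sub>R w) \<bullet> (x + t *\<^sub>R w) = T x \<bullet> x + 2 * t * (T x \<bullet> w) + t\<^sup>2 * (T w \<bullet> w)"
      by (simp add: linear_add[OF lin] linear_scale[OF lin] inner_add_left inner_add_right
          algebra_simps power2_eq_square)
    have q: "(x + t *\<^sub>R w) \<bullet> (x + t *\<^sub>R w) = x \<bullet> x + 2 * t * (x \<bullet> w) + t\<^sup>2 * (w \<bullet> w)"
      by (simp add: inner_add_left inner_add_right inner_commute[of w x] algebra_simps power2_eq_square)
    have a_eq: "c * (x \<bullet> w) - T x \<bullet> w = a"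
      by (simp add: a_def w_def inner_diff_left)
    have "c * ((x + t *\<^sub>R w) \<bullet> (x + t *\<^sub>R w)) - T (x + t *\<^sub>R w) \<bullet> (x + t *\<^sub>R w)
        = (c * (x \<bullet> x) - T x \<bullet> x) + 2 * t * a + t\<^sup>2 * b"
      unfolding Tq q b_def by (simp add: algebra_simps flip: a_eq)
    moreover have "c * (x \<bullet> x) - T x \<bullet> x = 0"
      using x(2) by (simp add: c_def norm_eq_1)
    ultimately show ?thesis
      using max[OF xtw] unfolding c_def by linarith
  qed
  have "a = 0"
  proof (rule ccontr)
    assume "a \<noteq> 0"
    then have "a > 0" by (simp add: a_def)
    \<comment> \<open>a small step from \<open>x\<close> in the direction \<open>-w\<close> would beat the maximum\<close>
    define s where "s = \<bar>b\<bar> + 1"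
    have "s > 0" by (simp add: s_def)
    have "0 \<le> 2 * (-a/s) * a + (-a/s)\<^sup>2 * b" by (rule perturb)
    also have "\<dots> = (a\<^sup>2 * (b - 2 * s)) / s\<^sup>2" using \<open>s > 0\<close> by (simp add: field_simps power2_eq_square)
    also have "\<dots> < 0" using \<open>a > 0\<close> \<open>s > 0\<close> by (intro divide_neg_pos mult_pos_neg) (auto simp: s_def)
    finally show False by simp
  qed
  then show ?thesis by (simp add: a_def w_def c_def)
qed

lemma self_adjoint_orthonormal_eigenbasis_of_subspace:
  fixes T :: "'a::euclidean_space \<Rightarrow> 'a"
  assumes lin: "linear T" and sym: "\<And>x y. T x \<bullet> y = x \<bullet> T y"
    and "subspace S" and "\<And>x. x \<in> S \<Longrightarrow> T x \<in> S"
  shows "\<exists>E. E \<subseteq> S \<and> finite E \<and> span E = S \<and> pairwise orthogonal E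
              \<and> (\<forall>e\<in>E. norm e = 1 \<and> (\<exists>c. T e = c *\<^sub>R e))"
  using assms(3,4)
proof (induction "dim S" arbitrary: S rule: less_induct)
  case less
  show ?case
  proof (cases "S = {0}")
    case True
    then show ?thesis by (intro exI[of _ "{}"]) auto
  next
    case False
    obtain x where x: "x \<in> S" "norm x = 1" and
      max: "\<And>y. y \<in> S \<Longrightarrow> T y \<bullet> y \<le> (T x \<bullet> x) * (y \<bullet> y)"
      using quadratic_form_max_on_subspace[OF lin less.prems(1) False] by blast
    have eig: "T x = (T x \<bullet> x) *\<^sub>R x"
      using self_adjoint_maximizer_is_eigenvector[OF lin sym less.prems x max] .
    define S' where "S' = S \<inter> {y. orthogonal x y}"
    have sub': "subspace S'"
      unfolding S'_def by (intro subspace_inter less.prems(1) subspace_orthogonal_to_vector)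
    have inv': "T y \<in> S'" if "y \<in> S'" for y
    proof -
      have "x \<bullet> T y = T x \<bullet> y" using sym by simp
      also have "\<dots> = 0" using that by (subst eig) (simp add: S'_def orthogonal_def)
      finally show ?thesis using that less.prems by (simp add: S'_def orthogonal_def)
    qed
    have "x \<notin> S'" using x by (auto simp: S'_def orthogonal_def)
    then have "dim S' < dim S"
      using x sub' less.prems(1) dim_psubset unfolding S'_def by (metis Int_lower1 psubsetI span_eq_iff)
    from less.hyps[OF this sub' inv'] obtain E where
      E: "E \<subseteq> S'" "finite E" "span E = S'" "pairwise orthogonal E"
         "\<forall>e\<in>E. norm e = 1 \<and> (\<exists>c. T e = c *\<^sub>R e)" by blast
    have "S \<subseteq> span (insert x E)"
    proof
      fix y assume y: "y \<in> S"
      have "y - (x \<bullet> y) *\<^sub>R x \<in> S'"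
        using y x less.prems(1)
        by (simp add: S'_def orthogonal_def subspace_diff subspace_scale inner_diff_right dot_square_norm)
      then have "y - (x \<bullet> y) *\<^sub>R x + (x \<bullet> y) *\<^sub>R x \<in> span (insert x E)"
        using E(3) by (intro span_add span_mul) (auto intro: span_base span_mono[THEN subsetD])
      then show "y \<in> span (insert x E)" by simp
    qed
    moreover have "span (insert x E) \<subseteq> S"
      using E(1) x(1) less.prems(1) by (intro span_minimal) (auto simp: S'_def)
    moreover have "pairwise orthogonal (insert x E)"
      using E(1,4) unfolding pairwise_insert S'_def by (auto simp: orthogonal_commute)
    ultimately show ?thesis
      using E x eig by (intro exI[of _ "insert x E"]) (auto simp: S'_def)
  qed
qed

lemma lin_trace_orthonormal_basis:
  fixes f :: "'a::euclidean_space \<Rightarrow> 'a"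
  assumes lin: "linear f" and E: "orthonormal_basis E"
  shows "lin_trace f = (\<Sum>e\<in>E. f e \<bullet> e)"
proof -
  have expand: "(\<Sum>e\<in>E. (x \<bullet> e) *\<^sub>R e) = x" for x
    using E by (intro orthonormal_basis_expand) (auto simp: orthonormal_basis_def)
  have "lin_trace f = (\<Sum>b\<in>Basis. \<Sum>e\<in>E. (f b \<bullet> e) * (e \<bullet> b))"
    unfolding lin_trace_def
  proof (intro sum.cong refl)
    fix b :: 'a
    have "f b \<bullet> b = (\<Sum>e\<in>E. (f b \<bullet> e) *\<^sub>R e) \<bullet> b" by (simp only: expand)
    then show "f b \<bullet> b = (\<Sum>e\<in>E. (f b \<bullet> e) * (e \<bullet> b))" by (simp add: inner_sum_left)
  qed
  also have "\<dots> = (\<Sum>e\<in>E. f (\<Sum>b\<in>Basis. (e \<bullet> b) *\<^sub>R b) \<bullet> e)"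
    by (subst sum.swap) (simp add: linear_sum[OF lin] linear_scale[OF lin] inner_sum_left mult.commute)
  also have "\<dots> = (\<Sum>e\<in>E. f e \<bullet> e)"
    by (simp add: euclidean_representation inner_commute)
  finally show ?thesis .
qed

lemma self_adjoint_positive_eigenvalue:
  fixes T :: "'a::euclidean_space \<Rightarrow> 'a"
  assumes lin: "linear T" and sym: "\<And>x y. T x \<bullet> y = x \<bullet> T y" and pos: "T z \<bullet> z > 0"
  shows "\<exists>c>0. is_eigenvalue T c"
proof -
  have "z \<noteq> 0" using pos by auto
  then have "(UNIV :: 'a set) \<noteq> {0}" by auto
  then obtain x where x: "norm x = 1" and max: "\<And>y. T y \<bullet> y \<le> (T x \<bullet> x) * (y \<bullet> y)"
    by (metis quadratic_form_max_on_subspace[OF lin subspace_UNIV] UNIV_I)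
  have "T x = (T x \<bullet> x) *\<^sub>R x"
    using self_adjoint_maximizer_is_eigenvector[OF lin sym subspace_UNIV _ _ x] max by blast
  moreover have "x \<noteq> 0" using x by auto
  moreover have "T x \<bullet> x > 0"
    using pos max[of z] by (metis inner_ge_zero less_le_trans mult_nonpos_nonneg not_le)
  ultimately show ?thesis unfolding is_eigenvalue_def by blast
qed

lemma orthonormal_basis_of_card_eq_dim:
  fixes F :: "'a::euclidean_space set"
  assumes "finite F" "pairwise orthogonal F" "\<And>f. f \<in> F \<Longrightarrow> norm f = 1" "card F = DIM('a)"
  shows "orthonormal_basis F"
proof -
  have "independent F" using assms(2,3) by (intro pairwise_orthogonal_independent) force+
  then have "span F = UNIV" using card_ge_dim_independent[of F UNIV] assms(4) by auto
  then show ?thesis using assms by (simp add: orthonormal_basis_def)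
qed

lemma card_orthonormal_basis:
  fixes E :: "'a::euclidean_space set"
  assumes "orthonormal_basis E"
  shows "card E = DIM('a)"
proof -
  have "independent E"
    using assms by (intro pairwise_orthogonal_independent) (auto simp: orthonormal_basis_def)
  then show ?thesis using dim_span_eq_card_independent assms by (fastforce simp: orthonormal_basis_def)
qed

lemma singular_orthonormal_basis:
  fixes M :: "'u::euclidean_space \<Rightarrow> 'v::euclidean_space"
  assumes M: "linear M"
  obtains E where "orthonormal_basis E"
    and "\<And>e e'. e \<in> E \<Longrightarrow> e' \<in> E \<Longrightarrow> e \<noteq> e' \<Longrightarrow> M e \<bullet> M e' = 0"
proof -
  let ?T = "adjoint M \<circ> M"
  have adj: "M x \<bullet> M y = x \<bullet> ?T y" for x y
    using adjoint_works[OF M] by simp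
  have lin: "linear ?T" using M by (intro linear_compose adjoint_linear)
  have sym: "?T x \<bullet> y = x \<bullet> ?T y" for x y
    by (metis adj inner_commute)
  obtain E where E: "finite E" "span E = UNIV" "pairwise orthogonal E"
      "\<forall>e\<in>E. norm e = 1 \<and> (\<exists>c. ?T e = c *\<^sub>R e)"
    using self_adjoint_orthonormal_eigenbasis_of_subspace[OF lin sym subspace_UNIV] by auto
  have "M e \<bullet> M e' = 0" if ee': "e \<in> E" "e' \<in> E" "e \<noteq> e'" for e e'
  proof -
    obtain c where "?T e' = c *\<^sub>R e'" using E(4) ee'(2) by blast
    then have "M e \<bullet> M e' = c * (e \<bullet> e')" by (simp add: adj)
    then show ?thesis using E(3) ee' by (simp add: pairwise_def orthogonal_def)
  qed
  moreover have "orthonormal_basis E" using E by (simp add: orthonormal_basis_def)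
  ultimately show thesis using that by blast
qed

lemma normalized_images_orthonormal_basis:
  fixes M :: "'u::euclidean_space \<Rightarrow> 'v::euclidean_space"
  assumes dim: "DIM('u) = DIM('v)" and E: "orthonormal_basis E"
    and orth: "\<And>e e'. e \<in> E \<Longrightarrow> e' \<in> E \<Longrightarrow> e \<noteq> e' \<Longrightarrow> M e \<bullet> M e' = 0"
    and nz: "\<And>e. e \<in> E \<Longrightarrow> M e \<noteq> 0"
  defines "g \<equiv> \<lambda>e. M e /\<^sub>R norm (M e)"
  shows "inj_on g E" and "orthonormal_basis (g ` E)"
proof -
  have unit: "g e \<bullet> g e = 1" if "e \<in> E" for e
    using nz[OF that] by (simp add: g_def dot_square_norm)
  have perp: "g e \<bullet> g e' = 0" if "e \<in> E" "e' \<in> E" "e \<noteq> e'" for e e'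
    using orth[OF that] by (simp add: g_def)
  show inj: "inj_on g E"
    by (rule inj_onI) (metis perp unit zero_neq_one)
  have "finite (g ` E)" using E by (simp add: orthonormal_basis_def)
  moreover have "pairwise orthogonal (g ` E)"
    unfolding pairwise_def orthogonal_def using perp by auto
  moreover have "\<And>f. f \<in> g ` E \<Longrightarrow> norm f = 1"
    using unit by (auto simp: norm_eq_1)
  moreover have "card (g ` E) = DIM('v)"
    using card_image[OF inj] card_orthonormal_basis[OF E] dim by simp
  ultimately show "orthonormal_basis (g ` E)" by (rule orthonormal_basis_of_card_eq_dim)
qed

definition block_operator ::
    "real \<Rightarrow> ('u::euclidean_space \<Rightarrow> 'u) \<Rightarrow> ('v::euclidean_space \<Rightarrow> 'v) \<Rightarrow> ('u \<Rightarrow> 'v)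
      \<Rightarrow> 'u \<times> 'v \<Rightarrow> 'u \<times> 'v" where
  "block_operator \<mu> A B M = (\<lambda>(u, v). (\<mu> *\<^sub>R u + A u + adjoint M v, M u + \<mu> *\<^sub>R v + B v))"

lemma linear_block_operator:
  assumes "linear A" "linear B" "linear M"
  shows "linear (block_operator \<mu> A B M)"
proof -
  have "linear (adjoint M)" using assms(3) by (rule adjoint_linear)
  then show ?thesis
    using assms unfolding block_operator_def
    by (intro linearI) (auto simp: linear_add linear_scale scaleR_add_right)
qed

lemma block_operator_self_adjoint:
  fixes A :: "'u::euclidean_space \<Rightarrow> 'u" and B :: "'v::euclidean_space \<Rightarrow> 'v"
  assumes A: "\<And>x y. A x \<bullet> y = x \<bullet> A y" and B: "\<And>x y. B x \<bullet> y = x \<bullet> B y" and M: "linear M"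
  shows "block_operator \<mu> A B M z \<bullet> w = z \<bullet> block_operator \<mu> A B M w"
proof -
  obtain a b c d where zw: "z = (a, b)" "w = (c, d)" by (cases z, cases w)
  have "adjoint M b \<bullet> c = M c \<bullet> b" "a \<bullet> adjoint M d = M a \<bullet> d"
    using adjoint_works[OF M] by (simp_all add: inner_commute)
  then show ?thesis
    unfolding zw block_operator_def
    by (simp add: inner_add_left inner_add_right A B inner_commute[of b "M c"])
qed

lemma inner_block_operator:
  assumes M: "linear M"
  shows "block_operator \<mu> A B M (u, v) \<bullet> (u, v)
           = \<mu> * (u \<bullet> u + v \<bullet> v) + A u \<bullet> u + B v \<bullet> v + 2 * (M u \<bullet> v)"
proof -
  have "adjoint M v \<bullet> u = M u \<bullet> v"
    using adjoint_works[OF M] by (simp add: inner_commute)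
  then show ?thesis
    unfolding block_operator_def by (simp add: inner_add_left algebra_simps)
qed

lemma block_operator_quadratic_form_positive:
  fixes A :: "'u::euclidean_space \<Rightarrow> 'u" and B :: "'v::euclidean_space \<Rightarrow> 'v" and M :: "'u \<Rightarrow> 'v"
  assumes dim: "DIM('u) = DIM('v)" and mu: "\<mu> > -1"
    and A_lin: "linear A" and A_tr: "lin_trace A = 0"
    and B_lin: "linear B" and B_tr: "lin_trace B = 0"
    and M_lin: "linear M" and M_ge: "\<And>u. norm (M u) \<ge> norm u"
  shows "\<exists>z. block_operator \<mu> A B M z \<bullet> z > 0"
proof -
  obtain E where E: "orthonormal_basis E"
    and orth: "\<And>e e'. e \<in> E \<Longrightarrow> e' \<in> E \<Longrightarrow> e \<noteq> e' \<Longrightarrow> M e \<bullet> M e' = 0"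
    using singular_orthonormal_basis[OF M_lin] by blast
  have unit: "e \<bullet> e = 1" if "e \<in> E" for e
    using E that by (simp add: orthonormal_basis_def dot_square_norm)
  have M_ge1: "norm (M e) \<ge> 1" if "e \<in> E" for e
    using M_ge[of e] E that by (simp add: orthonormal_basis_def)
  define g where "g e = M e /\<^sub>R norm (M e)" for e
  have nz: "M e \<noteq> 0" if "e \<in> E" for e using M_ge1[OF that] by auto
  have inj: "inj_on g E" and F: "orthonormal_basis (g ` E)"
    using normalized_images_orthonormal_basis[OF dim E orth nz] unfolding g_def by auto
  let ?Q = "\<lambda>e. block_operator \<mu> A B M (e, g e) \<bullet> (e, g e)"
  have Q: "?Q e = 2 * \<mu> + A e \<bullet> e + B (g e) \<bullet> g e + 2 * norm (M e)" if "e \<in> E" for e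
    using nz[OF that] unit[OF that]
    by (simp add: inner_block_operator[OF M_lin] g_def dot_square_norm power2_eq_square)
  have trA: "(\<Sum>e\<in>E. A e \<bullet> e) = 0"
    using lin_trace_orthonormal_basis[OF A_lin E] A_tr by simp
  have trB: "(\<Sum>e\<in>E. B (g e) \<bullet> g e) = 0"
    using lin_trace_orthonormal_basis[OF B_lin F] B_tr by (simp add: sum.reindex[OF inj])
  have "2 * (\<mu> + 1) * DIM('u) = (\<Sum>e\<in>E. 2 * (\<mu> + 1))"
    using card_orthonormal_basis[OF E] by simp
  also have "\<dots> \<le> (\<Sum>e\<in>E. 2 * \<mu> + 2 * norm (M e))"
    using M_ge1 by (intro sum_mono) auto
  also have "\<dots> = (\<Sum>e\<in>E. ?Q e)"
    using trA trB by (simp add: Q sum.distrib)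
  finally have "(\<Sum>e\<in>E. ?Q e) \<ge> 2 * (\<mu> + 1) * DIM('u)" .
  moreover have "2 * (\<mu> + 1) * DIM('u) > 0" using mu by simp
  ultimately have "(\<Sum>e\<in>E. ?Q e) > 0" by linarith
  then have "\<not> (\<forall>e\<in>E. ?Q e \<le> 0)"
    using sum_nonpos[of E ?Q] by force
  then show ?thesis by (auto simp: not_le)
qed

theorem mainTheorem15:
  fixes A :: "'u::euclidean_space \<Rightarrow> 'u"
    and B :: "'v::euclidean_space \<Rightarrow> 'v"
    and M :: "'u \<Rightarrow> 'v"
    and \<mu> :: real
  assumes dim: "DIM('u) = DIM('v)"
    and mu: "\<mu> > -1"
    and A_lin: "linear A" and A_sym: "\<And>x y. A x \<bullet> y = x \<bullet> A y" and A_tr: "lin_trace A = 0"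
    and B_lin: "linear B" and B_sym: "\<And>x y. B x \<bullet> y = x \<bullet> B y" and B_tr: "lin_trace B = 0"
    and M_lin: "linear M"
    and M_ge: "\<And>u. norm (M u) \<ge> norm u"
  shows "\<exists>c>0. is_eigenvalue
           (\<lambda>(u, v). (\<mu> *\<^sub>R u + A u + adjoint M v, M u + \<mu> *\<^sub>R v + B v)) c"
proof -
  obtain z where "block_operator \<mu> A B M z \<bullet> z > 0"
    using block_operator_quadratic_form_positive[OF dim mu A_lin A_tr B_lin B_tr M_lin M_ge] by blast
  then have "\<exists>c>0. is_eigenvalue (block_operator \<mu> A B M) c"
    using linear_block_operator[OF A_lin B_lin M_lin] block_operator_self_adjoint[OF A_sym B_sym M_lin]
    by (rule self_adjoint_positive_eigenvalue[rotated 2])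
  then show ?thesis by (simp add: block_operator_def)
qed

end
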